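(* Let $f(x)=\max_{a\in A}(c_a+a\cdot x)$ be a homogeneous tropical signomial on $\mathbb{R}^n$, and let $H=\{x\in\mathbb{R}^n:\sum_j x_j=0\}$. Then $f$ attains a minimum over $H$ if and only if some cell $\sigma$ of the regular subdivision $\Delta(f)$ contains a point of the form $\lambda\mathbf{1}_n$, $\lambda\in\mathbb{R}$, in its relative interior (the central cell); in that case the set of minimizers of $f$ over $H$ is exactly the cell of $\overline{\mathrm{NC}}(f)$ dual to $\sigma$.
   Context: A tropical signomial is $f(x)=\max_{a\in A}(c_a+a\cdot x)$ with $A\subset\mathbb{R}^n_{\ge 0}$ finite and $c_a\in\mathbb{R}\cup\{-\infty\}$; its support is $\mathrm{supp}(f)=\{a\in A: c_a\neq-\infty\}$, assumed nonempty, with distinct exponents. $f$ is homogeneous if $\sum_j a_j$ is the same for all $a\in \mathrm{supp}(f)$. For $x\in\mathbb{R}^n$ let $B(x)=\{a\in\mathrm{supp}(f): c_a+a\cdot x=f(x)\}$. The regular subdivision $\Delta(f)$ (induced by lifting $a$ to $(a,c_a)$ and taking upper faces) has as cells the polytopes $\mathrm{conv}(B(x))$, $x\in\mathbb{R}^n$; a cell $\sigma=\mathrm{conv}(B(x))$ determines the set $B(x)$. The normal complex $\mathrm{NC}(f)$ consists of the polyhedra $D(\sigma)=\{y\in\mathbb{R}^n: B(x)\subseteq B(y)\}$ for cells $\sigma=\mathrm{conv}(B(x))$ (the regions where $f$ is linear and their faces); $D(\sigma)$ is the cell dual to $\sigma$. $\overline{\mathrm{NC}}(f)$ is the complex $\{D(\sigma)\cap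 H\}$, and the cell of $\overline{\mathrm{NC}}(f)$ dual to $\sigma$ is $D(\sigma)\cap H$. *)

theory Defs
  imports "HOL-Analysis.Analysis"
begin

text \<open>A tropical signomial is given by a finite exponent set A \<subseteq> R^n_{\<ge>0} and
coefficients c_a in R \<union> {-\<infinity>} (modelled as ereal; only -\<infinity> and finite values matter).\<close>

definition tsupp :: "(real^'n) set \<Rightarrow> (real^'n \<Rightarrow> ereal) \<Rightarrow> (real^'n) set" where
  "tsupp A c = {a \<in> A. c a \<noteq> -\<infinity>}"

definition is_tsignomial :: "(real^'n) set \<Rightarrow> (real^'n \<Rightarrow> ereal) \<Rightarrow> bool" where
  "is_tsignomial A c \<longleftrightarrow> finite A \<and> (\<forall>a\<in>A. \<forall>i. 0 \<le> a $ i)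
     \<and> tsupp A c \<noteq> {} \<and> (\<forall>a\<in>A. c a \<noteq> \<infinity>)"

definition teval :: "(real^'n) set \<Rightarrow> (real^'n \<Rightarrow> ereal) \<Rightarrow> real^'n \<Rightarrow> real" where
  "teval A c x = Max ((\<lambda>a. real_of_ereal (c a) + a \<bullet> x) ` tsupp A c)"

definition thomogeneous :: "(real^'n) set \<Rightarrow> (real^'n \<Rightarrow> ereal) \<Rightarrow> bool" where
  "thomogeneous A c \<longleftrightarrow> (\<exists>d. \<forall>a\<in>tsupp A c. (\<Sum>j\<in>UNIV. a $ j) = d)"

definition tB :: "(real^'n) set \<Rightarrow> (real^'n \<Rightarrow> ereal) \<Rightarrow> real^'n \<Rightarrow> (real^'n) set" where
  "tB A c x = {a \<in> tsupp A c. real_of_ereal (c a) + a \<bullet> x = teval A c x}"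

text \<open>Cells of the regular subdivision \<Delta>(f): conv(B(x)).\<close>
definition tcells :: "(real^'n) set \<Rightarrow> (real^'n \<Rightarrow> ereal) \<Rightarrow> (real^'n) set set" where
  "tcells A c = {convex hull (tB A c x) | x. True}"

text \<open>Dual cell D(\<sigma>) of \<sigma> = conv(B(x)) in NC(f).\<close>
definition tdual :: "(real^'n) set \<Rightarrow> (real^'n \<Rightarrow> ereal) \<Rightarrow> real^'n \<Rightarrow> (real^'n) set" where
  "tdual A c x = {y. tB A c x \<subseteq> tB A c y}"

definition hypH :: "(real^'n) set" where
  "hypH = {x. (\<Sum>j\<in>UNIV. x $ j) = 0}"

end

theory Submission
  imports Defs
begin

text \<open>The function f is convex and piecewise linear, conv B(x) is its subdifferential at x, and
  homogeneity of degree d gives f(x + s 1) = f(x) + s d with B(x) constant along 1. Hence x \<in> H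
  minimises f on H iff t 1 \<in> conv B(x) for some t: one direction is the subgradient inequality, the
  other separates the line R 1 from conv B(x). A minimiser with the fewest active exponents has
  t 1 in the relative interior of conv B(x), since otherwise a supporting functional at t 1,
  projected onto H, is a direction in H along which f stays constant while B(x) shrinks.
  Finally, if t 1 \<in> ri conv B(x0), every linear functional maximised over B(x0) at t 1 is
  constant on B(x0); applied to the difference of two minimisers, this shows that the minimisers
  are exactly the points y of H with B(x0) \<subseteq> B(y).\<close>

lemma convex_hull_inner_le:
  assumes "\<And>b. b \<in> S \<Longrightarrow> b \<bullet> a \<le> m" "p \<in> convex hull S"
  shows "p \<bullet> a \<le> (m::real)"
proof -
  have "{p. p \<bullet> a \<le> m} = {p. a \<bullet> p \<le> m}"
    by (simp add: inner_commute)
  then have "convex {p. p \<bullet> a \<le> m}"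
    by (simp add: convex_halfspace_le)
  then have "convex hull S \<subseteq> {p. p \<bullet> a \<le> m}"
    using assms(1) by (intro hull_minimal) auto
  then show ?thesis using assms(2) by auto
qed

lemma convex_hull_inner_eq:
  assumes "\<And>b. b \<in> S \<Longrightarrow> b \<bullet> a = m" "p \<in> convex hull S"
  shows "p \<bullet> a = (m::real)"
  using convex_hull_inner_le[of S a m p] convex_hull_inner_le[of S "-a" "-m" p] assms
  by fastforce

lemma in_rel_interior_convex_hull_iff:
  fixes S :: "'a::euclidean_space set"
  shows "p \<in> rel_interior (convex hull S) \<longleftrightarrow>
    p \<in> convex hull S \<and> (\<forall>a. (\<forall>b\<in>S. b \<bullet> a \<le> p \<bullet> a) \<longrightarrow> (\<forall>b\<in>S. b \<bullet> a = p \<bullet> a))"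
  (is "_ \<longleftrightarrow> p \<in> ?K \<and> _")
proof safe
  assume p: "p \<in> rel_interior ?K"
  then show "p \<in> ?K" using rel_interior_subset by blast
  fix a b assume le: "\<forall>b\<in>S. b \<bullet> a \<le> p \<bullet> a" and b: "b \<in> S"
  have "b \<in> affine hull ?K"
    using b hull_subset[of S convex] hull_subset[of ?K affine] by blast
  then obtain m where m: "m > 1" "(1 - m) *\<^sub>R b + m *\<^sub>R p \<in> ?K"
    using convex_rel_interior_if[OF convex_convex_hull p] by blast
  have "((1 - m) *\<^sub>R b + m *\<^sub>R p) \<bullet> a \<le> p \<bullet> a"
    using convex_hull_inner_le[OF _ m(2)] le by blast
  then have "(1 - m) * (b \<bullet> a - p \<bullet> a) \<le> 0"
    by (simp add: algebra_simps)
  then have "p \<bullet> a \<le> b \<bullet> a"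
    using m(1) by (simp add: mult_le_0_iff)
  then show "b \<bullet> a = p \<bullet> a"
    using le b by (simp add: antisym)
next
  assume p: "p \<in> ?K" and face: "\<forall>a. (\<forall>b\<in>S. b \<bullet> a \<le> p \<bullet> a) \<longrightarrow> (\<forall>b\<in>S. b \<bullet> a = p \<bullet> a)"
  show "p \<in> rel_interior ?K"
  proof (rule ccontr)
    assume "p \<notin> rel_interior ?K"
    then obtain a where a: "\<And>y. y \<in> closure ?K \<Longrightarrow> a \<bullet> p \<le> a \<bullet> y"
      "\<And>y. y \<in> rel_interior ?K \<Longrightarrow> a \<bullet> p < a \<bullet> y"
      using supporting_hyperplane_relative_frontier[OF convex_convex_hull] p closure_subset
      by (metis subsetD)
    have "b \<bullet> (-a) \<le> p \<bullet> (-a)" if "b \<in> S" for b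
      using a(1)[of b] that closure_subset hull_subset[of S convex] by (auto simp: inner_commute)
    then have "\<forall>b\<in>S. b \<bullet> (-a) = p \<bullet> (-a)"
      using face by blast
    then have "y \<bullet> a = p \<bullet> a" if "y \<in> ?K" for y
      using convex_hull_inner_eq[of S "-a" "p \<bullet> (-a)" y] that by simp
    moreover obtain y where y: "y \<in> rel_interior ?K"
      using p rel_interior_eq_empty[of ?K] by auto
    ultimately have "y \<bullet> a = p \<bullet> a"
      using rel_interior_subset by blast
    then show False
      using a(2)[OF y] by (simp add: inner_commute)
  qed
qed

abbreviation ones :: "real^'n" where
  "ones \<equiv> \<chi> i. 1"

definition hypH_minimizer :: "(real^'n) set \<Rightarrow> (real^'n \<Rightarrow> ereal) \<Rightarrow> real^'n \<Rightarrow> bool" where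
  "hypH_minimizer A c x \<longleftrightarrow> x \<in> hypH \<and> (\<forall>y\<in>hypH. teval A c x \<le> teval A c y)"

definition hypH_proj :: "real^'n \<Rightarrow> real^'n" where
  "hypH_proj x = x - (x \<bullet> ones / CARD('n)) *\<^sub>R ones"

lemma finite_tsupp: "is_tsignomial A c \<Longrightarrow> finite (tsupp A c)"
  unfolding is_tsignomial_def tsupp_def by auto

lemma term_le_teval:
  "is_tsignomial A c \<Longrightarrow> b \<in> tsupp A c \<Longrightarrow> real_of_ereal (c b) + b \<bullet> x \<le> teval A c x"
  unfolding teval_def by (intro Max_ge) (auto simp: finite_tsupp)

lemma ex_term_eq_teval:
  assumes "is_tsignomial A c"
  obtains b where "b \<in> tsupp A c" "real_of_ereal (c b) + b \<bullet> x = teval A c x"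
proof -
  have "teval A c x \<in> (\<lambda>b. real_of_ereal (c b) + b \<bullet> x) ` tsupp A c"
    unfolding teval_def using assms by (intro Max_in) (auto simp: finite_tsupp is_tsignomial_def)
  then show ?thesis using that by force
qed

lemma teval_eqI:
  assumes "is_tsignomial A c" "\<And>b. b \<in> tsupp A c \<Longrightarrow> real_of_ereal (c b) + b \<bullet> x \<le> v"
    "b0 \<in> tsupp A c" "real_of_ereal (c b0) + b0 \<bullet> x = v"
  shows "teval A c x = v"
  by (metis assms antisym ex_term_eq_teval term_le_teval)

lemma tB_subset_tsupp: "tB A c x \<subseteq> tsupp A c"
  unfolding tB_def by auto

lemma tB_not_empty: "is_tsignomial A c \<Longrightarrow> tB A c x \<noteq> {}"
  unfolding tB_def by (metis (mono_tags, lifting) empty_Collect_eq ex_term_eq_teval)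

lemma finite_tB: "is_tsignomial A c \<Longrightarrow> finite (tB A c x)"
  using finite_subset[OF tB_subset_tsupp finite_tsupp] .

lemma inner_ones: "x \<bullet> ones = (\<Sum>j\<in>UNIV. x $ j)"
  by (simp add: inner_vec_def)

lemma inner_ones_ones: "ones \<bullet> (ones :: real^'n) = CARD('n)"
  by (simp add: inner_vec_def)

lemma hypH_iff_inner_ones: "x \<in> hypH \<longleftrightarrow> x \<bullet> ones = 0"
  by (simp add: hypH_def inner_ones)

lemma thomogeneous_degree:
  assumes "thomogeneous A c"
  obtains d where "\<And>b. b \<in> tsupp A c \<Longrightarrow> b \<bullet> ones = d"
  using assms unfolding thomogeneous_def inner_ones by blast

lemma tB_add_ones:
  assumes h: "is_tsignomial A c" and d: "\<And>b. b \<in> tsupp A c \<Longrightarrow> b \<bullet> ones = d"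
  shows "tB A c (x + s *\<^sub>R ones) = tB A c x"
proof -
  have shift: "b \<bullet> (x + s *\<^sub>R ones) = b \<bullet> x + s * d" if "b \<in> tsupp A c" for b
    using d[OF that] by (simp add: inner_add_right)
  obtain b0 where "b0 \<in> tsupp A c" "real_of_ereal (c b0) + b0 \<bullet> x = teval A c x"
    using ex_term_eq_teval[OF h] .
  then have "teval A c (x + s *\<^sub>R ones) = teval A c x + s * d"
    using shift term_le_teval[OF h] by (intro teval_eqI[OF h]) force+
  then show ?thesis
    unfolding tB_def using shift by force
qed

lemma hypH_proj_in_hypH: "hypH_proj x \<in> hypH"
  by (simp add: hypH_proj_def hypH_iff_inner_ones inner_diff_left inner_ones_ones)

lemma inner_hypH_proj: "y \<bullet> hypH_proj (u :: real^'n) = y \<bullet> u - (u \<bullet> ones / CARD('n)) * (y \<bullet> ones)"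
  by (simp add: hypH_proj_def inner_diff_right)

lemma tB_hypH_proj:
  assumes "is_tsignomial A c" "thomogeneous A c"
  shows "tB A c (hypH_proj x) = tB A c x"
proof -
  obtain d where "\<And>b. b \<in> tsupp A c \<Longrightarrow> b \<bullet> ones = d"
    using thomogeneous_degree[OF assms(2)] by blast
  then have "tB A c (x + (- (x \<bullet> ones / CARD('n))) *\<^sub>R ones) = tB A c x"
    by (rule tB_add_ones[OF assms(1)])
  then show ?thesis
    by (simp add: hypH_proj_def)
qed

lemma teval_subgradient:
  assumes h: "is_tsignomial A c" and p: "p \<in> convex hull (tB A c x)"
  shows "teval A c x + p \<bullet> (y - x) \<le> teval A c y"
proof -
  have "b \<bullet> (y - x) \<le> teval A c y - teval A c x" if "b \<in> tB A c x" for b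
    using that term_le_teval[OF h, of b y] unfolding tB_def by (auto simp: inner_diff_right)
  then show ?thesis
    using convex_hull_inner_le[OF _ p] by fastforce
qed

lemma teval_perturb:
  fixes x u :: "real^'n"
  assumes h: "is_tsignomial A c"
  defines "m \<equiv> Max ((\<lambda>b. b \<bullet> u) ` tB A c x)"
  obtains e where "e > 0" "teval A c (x + e *\<^sub>R u) = teval A c x + e * m"
    "tB A c (x + e *\<^sub>R u) = {b \<in> tB A c x. b \<bullet> u = m}"
proof -
  let ?r = "\<lambda>b. real_of_ereal (c b)"
  have "\<forall>\<^sub>F e in at_right 0. ?r b + b \<bullet> (x + e *\<^sub>R u) < teval A c x + e * m"
    if "b \<in> tsupp A c - tB A c x" for b
  proof -
    have "?r b + b \<bullet> x < teval A c x"
      using that term_le_teval[OF h, of b x] unfolding tB_def by auto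
    moreover have "((\<lambda>e. ?r b + b \<bullet> x + e * (b \<bullet> u - m)) \<longlongrightarrow> ?r b + b \<bullet> x) (at_right 0)"
      by (auto intro!: tendsto_eq_intros)
    ultimately have "\<forall>\<^sub>F e in at_right 0. ?r b + b \<bullet> x + e * (b \<bullet> u - m) < teval A c x"
      by (simp add: order_tendstoD(2))
    then show ?thesis
      by eventually_elim (simp add: algebra_simps)
  qed
  then have "\<forall>\<^sub>F e in at_right 0. e > 0 \<and>
      (\<forall>b\<in>tsupp A c - tB A c x. ?r b + b \<bullet> (x + e *\<^sub>R u) < teval A c x + e * m)"
    using finite_tsupp[OF h] by (intro eventually_conj eventually_ball_finite)
      (auto simp: eventually_at_right_less)
  then obtain e where e: "e > 0"
    and inactive: "\<And>b. b \<in> tsupp A c - tB A c x \<Longrightarrow> ?r b + b \<bullet> (x + e *\<^sub>R u) < teval A c x + e * m"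
    using eventually_happens'[OF trivial_limit_at_right_real] by blast
  have active: "?r b + b \<bullet> (x + e *\<^sub>R u) = teval A c x + e * (b \<bullet> u)" if "b \<in> tB A c x" for b
    using that unfolding tB_def by (auto simp: inner_add_right)
  have le_m: "b \<bullet> u \<le> m" if "b \<in> tB A c x" for b
    unfolding m_def using finite_tB[OF h] that by (intro Max_ge) auto
  have "m \<in> (\<lambda>b. b \<bullet> u) ` tB A c x"
    unfolding m_def using finite_tB[OF h] tB_not_empty[OF h] by (intro Max_in) auto
  then obtain b0 where b0: "b0 \<in> tB A c x" "b0 \<bullet> u = m" by blast
  have eval: "teval A c (x + e *\<^sub>R u) = teval A c x + e * m"
  proof (rule teval_eqI[OF h])
    fix b assume "b \<in> tsupp A c"
    then show "?r b + b \<bullet> (x + e *\<^sub>R u) \<le> teval A c x + e * m"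
      using active le_m inactive e by (cases "b \<in> tB A c x") (auto intro!: mult_left_mono less_imp_le)
  qed (use active b0 subsetD[OF tB_subset_tsupp] in auto)
  have "tB A c (x + e *\<^sub>R u) = {b \<in> tB A c x. b \<bullet> u = m}"
    using inactive active e tB_subset_tsupp unfolding tB_def[of A c "x + e *\<^sub>R u"] eval
    by (force simp: tB_def)
  with e eval that show ?thesis by blast
qed

lemma hypH_minimizer_if_ones_in_cell:
  fixes x :: "real^'n"
  assumes "is_tsignomial A c" "x \<in> hypH" "t *\<^sub>R ones \<in> convex hull (tB A c x)"
  shows "hypH_minimizer A c x"
  unfolding hypH_minimizer_def
proof safe
  fix y :: "real^'n" assume "y \<in> hypH"
  then have "(t *\<^sub>R ones) \<bullet> (y - x) = 0"
    using assms(2) by (simp add: hypH_iff_inner_ones inner_diff_right inner_commute)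
  then show "teval A c x \<le> teval A c y"
    using teval_subgradient[OF assms(1,3), of y] by (metis add_0_right)
qed (rule assms(2))

lemma hypH_minimizer_directional_derivative:
  assumes h: "is_tsignomial A c" and x: "hypH_minimizer A c x" and u: "u \<in> hypH"
  shows "0 \<le> Max ((\<lambda>b. b \<bullet> u) ` tB A c x)"
proof -
  obtain e where e: "e > 0" "teval A c (x + e *\<^sub>R u) = teval A c x + e * Max ((\<lambda>b. b \<bullet> u) ` tB A c x)"
    using teval_perturb[OF h] by metis
  have "x + e *\<^sub>R u \<in> hypH"
    using x u by (simp add: hypH_minimizer_def hypH_iff_inner_ones inner_add_left)
  then show ?thesis
    using x e by (auto simp: hypH_minimizer_def zero_le_mult_iff)
qed

text \<open>Separate the line R 1 from conv B(x): the separating functional lies in H and is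
  positive on B(x), so f decreases along its negative.\<close>
lemma hypH_minimizer_ones_in_cell:
  assumes h: "is_tsignomial A c" and x: "hypH_minimizer A c x"
  obtains t where "t *\<^sub>R ones \<in> convex hull (tB A c x)"
proof (rule ccontr)
  let ?K = "convex hull (tB A c x)"
  assume "\<not> thesis"
  then have "span {ones} \<inter> ?K = {}"
    using that by (auto simp: span_singleton)
  moreover have "compact ?K" "?K \<noteq> {}"
    using finite_tB[OF h] tB_not_empty[OF h] by (auto simp: finite_imp_compact_convex_hull)
  ultimately obtain a \<beta> where a: "\<forall>z\<in>span {ones}. a \<bullet> z < \<beta>" "\<forall>y\<in>?K. \<beta> < a \<bullet> y"
    using separating_hyperplane_closed_compact[OF subspace_imp_convex[OF subspace_span] closed_span
        convex_convex_hull]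
    by blast
  have "a \<bullet> ones = 0"
  proof (rule ccontr)
    assume "a \<bullet> ones \<noteq> 0"
    then have "a \<bullet> ((\<beta> / (a \<bullet> ones)) *\<^sub>R ones) = \<beta>" by simp
    then show False using a(1) by (metis less_irrefl span_base span_scale singletonI)
  qed
  then have "-a \<in> hypH"
    by (simp add: hypH_iff_inner_ones inner_commute)
  moreover have "b \<bullet> (-a) < 0" if "b \<in> tB A c x" for b
    using a span_zero that hull_subset[of "tB A c x" convex] by (fastforce simp: inner_commute)
  ultimately show False
    using hypH_minimizer_directional_derivative[OF h x, of "-a"] finite_tB[OF h] tB_not_empty[OF h]
    by (simp add: Max_ge_iff) (metis not_less)
qed

text \<open>A supporting functional at a relative boundary point t 1, projected onto H, is a direction
  along which f stays constant while B(x) shrinks; hence the card-minimality hypothesis.\<close>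
lemma hypH_minimizer_ones_in_rel_interior:
  fixes x :: "real^'n"
  assumes h: "is_tsignomial A c" and hom: "thomogeneous A c"
    and x: "hypH_minimizer A c x"
    and card_min: "\<And>y. hypH_minimizer A c y \<Longrightarrow> card (tB A c x) \<le> card (tB A c y)"
  obtains t where "t *\<^sub>R ones \<in> rel_interior (convex hull (tB A c x))"
proof -
  let ?K = "convex hull (tB A c x)"
  obtain t where t: "t *\<^sub>R ones \<in> ?K"
    using hypH_minimizer_ones_in_cell[OF h x] .
  have "t *\<^sub>R ones \<in> rel_interior ?K"
  proof (rule ccontr)
    let ?p = "t *\<^sub>R ones :: real^'n"
    assume "?p \<notin> rel_interior ?K"
    then obtain a where a_le: "\<forall>b\<in>tB A c x. b \<bullet> a \<le> ?p \<bullet> a"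
      and a_lt: "\<exists>b\<in>tB A c x. b \<bullet> a \<noteq> ?p \<bullet> a"
      using t unfolding in_rel_interior_convex_hull_iff by blast
    obtain d where "\<And>b. b \<in> tsupp A c \<Longrightarrow> b \<bullet> ones = d"
      using thomogeneous_degree[OF hom] by blast
    then have d: "b \<bullet> ones = d" if "b \<in> tB A c x" for b
      using that tB_subset_tsupp by blast
    have "?p \<bullet> ones = d"
      using convex_hull_inner_eq[OF d t] .
    define u where "u = hypH_proj a"
    have u: "u \<in> hypH" unfolding u_def by (rule hypH_proj_in_hypH)
    then have "?p \<bullet> u = 0" by (simp add: hypH_iff_inner_ones inner_commute)
    then have ub: "b \<bullet> u = b \<bullet> a - ?p \<bullet> a" if "b \<in> tB A c x" for b
      using d[OF that] \<open>?p \<bullet> ones = d\<close> unfolding u_def inner_hypH_proj by simp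
    have max0: "Max ((\<lambda>b. b \<bullet> u) ` tB A c x) = 0"
      using ub a_le hypH_minimizer_directional_derivative[OF h x u] finite_tB[OF h] tB_not_empty[OF h]
      by (intro antisym) auto
    obtain e where e: "e > 0" "teval A c (x + e *\<^sub>R u) = teval A c x"
      "tB A c (x + e *\<^sub>R u) = {b \<in> tB A c x. b \<bullet> u = 0}"
      using teval_perturb[OF h, of x u] unfolding max0 by auto
    have "hypH_minimizer A c (x + e *\<^sub>R u)"
      using x u e(2) by (simp add: hypH_minimizer_def hypH_iff_inner_ones inner_add_left)
    then have "card (tB A c x) \<le> card (tB A c (x + e *\<^sub>R u))"
      by (rule card_min)
    moreover have "tB A c (x + e *\<^sub>R u) \<subset> tB A c x"
    proof -
      obtain b where b: "b \<in> tB A c x" "b \<bullet> a \<noteq> ?p \<bullet> a"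
        using a_lt by blast
      then have "b \<notin> tB A c (x + e *\<^sub>R u)"
        using e(3) ub by simp
      then show ?thesis
        using b(1) e(3) by blast
    qed
    ultimately show False
      using psubset_card_mono[OF finite_tB[OF h]] by (simp add: not_le[symmetric])
  qed
  then show ?thesis using that by blast
qed

lemma hypH_minimizer_hypH_proj:
  assumes h: "is_tsignomial A c" and hom: "thomogeneous A c"
    and t: "t *\<^sub>R ones \<in> convex hull (tB A c x0)"
  shows "hypH_minimizer A c (hypH_proj x0)"
  using hypH_minimizer_if_ones_in_cell[OF h hypH_proj_in_hypH] t tB_hypH_proj[OF h hom] by simp

lemma hypH_minimizer_iff_tdual:
  assumes h: "is_tsignomial A c" and hom: "thomogeneous A c"
    and ri: "t *\<^sub>R ones \<in> rel_interior (convex hull (tB A c x0))"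
  shows "hypH_minimizer A c x \<longleftrightarrow> x \<in> tdual A c x0 \<inter> hypH"
proof
  let ?x' = "hypH_proj x0"
  have x': "hypH_minimizer A c ?x'"
    using hypH_minimizer_hypH_proj[OF h hom] ri rel_interior_subset by blast
  assume x: "hypH_minimizer A c x"
  then have eq: "teval A c x = teval A c ?x'"
    using x' by (auto simp: hypH_minimizer_def intro: antisym)
  have x'_term: "real_of_ereal (c b) + b \<bullet> ?x' = teval A c x" "b \<in> tsupp A c"
    if "b \<in> tB A c x0" for b
    using that eq tB_hypH_proj[OF h hom, of x0] by (auto simp: tB_def)
  have face: "\<And>a. \<forall>b\<in>tB A c x0. b \<bullet> a \<le> (t *\<^sub>R ones) \<bullet> a \<Longrightarrow>
      \<forall>b\<in>tB A c x0. b \<bullet> a = (t *\<^sub>R ones) \<bullet> a"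
    using ri unfolding in_rel_interior_convex_hull_iff by blast
  have zero: "(t *\<^sub>R ones) \<bullet> (x - ?x') = 0"
    using x x' by (simp add: hypH_minimizer_def hypH_iff_inner_ones inner_diff_right inner_commute)
  have "b \<bullet> (x - ?x') \<le> 0" if "b \<in> tB A c x0" for b
    using x'_term[OF that] term_le_teval[OF h, of b x] by (simp add: inner_diff_right)
  then have orth: "\<forall>b\<in>tB A c x0. b \<bullet> (x - ?x') = 0"
    using face[of "x - ?x'", unfolded zero] by blast
  have "b \<in> tB A c x" if "b \<in> tB A c x0" for b
  proof -
    have "real_of_ereal (c b) + b \<bullet> x = teval A c x"
      using x'_term(1)[OF that] orth that by (simp add: inner_diff_right)
    then show ?thesis
      using x'_term(2)[OF that] by (simp add: tB_def)
  qed
  then have "tB A c x0 \<subseteq> tB A c x" by blast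
  then show "x \<in> tdual A c x0 \<inter> hypH"
    using x by (simp add: tdual_def hypH_minimizer_def)
next
  assume "x \<in> tdual A c x0 \<inter> hypH"
  then show "hypH_minimizer A c x"
    using hypH_minimizer_if_ones_in_cell[OF h] ri rel_interior_subset hull_mono
    by (fastforce simp: tdual_def)
qed

theorem lemma2p7:
  fixes A :: "(real^'n) set" and c :: "real^'n \<Rightarrow> ereal"
  assumes "is_tsignomial A c" and "thomogeneous A c"
  shows "((\<exists>x\<in>hypH. \<forall>y\<in>hypH. teval A c x \<le> teval A c y) \<longleftrightarrow>
            (\<exists>x0 t. (t *\<^sub>R (\<chi> i. 1)) \<in> rel_interior (convex hull (tB A c x0))))
       \<and> (\<forall>x0 t. (t *\<^sub>R (\<chi> i. 1)) \<in> rel_interior (convex hull (tB A c x0)) \<longrightarrow>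
            {x \<in> hypH. \<forall>y\<in>hypH. teval A c x \<le> teval A c y} = tdual A c x0 \<inter> hypH)"
proof -
  have "(\<exists>x. hypH_minimizer A c x) \<longleftrightarrow> (\<exists>x0 t. t *\<^sub>R ones \<in> rel_interior (convex hull (tB A c x0)))"
  proof
    assume "\<exists>x. hypH_minimizer A c x"
    then obtain x where "hypH_minimizer A c x"
      "\<And>y. hypH_minimizer A c y \<Longrightarrow> card (tB A c x) \<le> card (tB A c y)"
      using ex_has_least_nat[of "hypH_minimizer A c" _ "\<lambda>x. card (tB A c x)"] by blast
    then show "\<exists>x0 t. t *\<^sub>R ones \<in> rel_interior (convex hull (tB A c x0))"
      using hypH_minimizer_ones_in_rel_interior[OF assms] by metis
  next
    assume "\<exists>x0 t. t *\<^sub>R ones \<in> rel_interior (convex hull (tB A c x0))"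
    then show "\<exists>x. hypH_minimizer A c x"
      using hypH_minimizer_hypH_proj[OF assms] rel_interior_subset by blast
  qed
  then show ?thesis
    using hypH_minimizer_iff_tdual[OF assms] unfolding hypH_minimizer_def by blast
qed

end
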